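(* Let $(\mathcal A,\mathcal T,(-))$ be a meta-tangible $\mathcal T$-triple and $a,b\in\mathcal T$. Then at least one of the following holds: (i) $a=(-)b$; (ii) $a+b=a$ (and then also $a^\circ+b=a^\circ$); (iii) $a^\circ+b=b$.
   Context: $(\mathcal A,+,\mathbb 0)$ commutative monoid, $\mathcal T\subseteq\mathcal A\setminus\{\mathbb 0\}$. A negation map is $(-):\mathcal A\to\mathcal A$ with $(-)(b_1+b_2)=(-)b_1+(-)b_2$, $(-)((-)b)=b$, $(-)\mathbb 0=\mathbb 0$, $(-)\mathcal T\subseteq\mathcal T$. Write $b(-)c:=b+((-)c)$, $b^\circ:=b(-)b$, $\mathcal A^\circ=\{b^\circ:b\in\mathcal A\}$. A $\mathcal T$-triple $(\mathcal A,\mathcal T,(-))$: such data with an action $\mathcal T\times\mathcal A\to\mathcal A$ satisfying $a(b_1+b_2)=ab_1+ab_2$, $a\mathbb 0=\mathbb 0$, $(-)(ab)=((-)a)b=a((-)b)$, with $\mathcal T\cap\mathcal A^\circ=\emptyset$ and every element of $\mathcal A$ a finite sum of elements of $\mathcal T$. The triple is meta-tangible if $a+b\in\mathcal T$ for all $a,b\in\mathcal T$ with $b\neq(-)a$. *)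

theory Defs
  imports Main
begin

text \<open>The monoid A is the whole
type 'a with addition add and zero z; the action T x A -> A is modelled by a
function act whose axioms are only required for first argument in T.\<close>

inductive_set tsums :: "('a \<Rightarrow> 'a \<Rightarrow> 'a) \<Rightarrow> 'a \<Rightarrow> 'a set \<Rightarrow> 'a set"
  for add :: "'a \<Rightarrow> 'a \<Rightarrow> 'a" and z :: 'a and T :: "'a set" where
  tsums_zero: "z \<in> tsums add z T"
| tsums_gen: "t \<in> T \<Longrightarrow> t \<in> tsums add z T"
| tsums_add: "x \<in> tsums add z T \<Longrightarrow> y \<in> tsums add z T \<Longrightarrow> add x y \<in> tsums add z T"

definition quasi_zero :: "('a \<Rightarrow> 'a \<Rightarrow> 'a) \<Rightarrow> ('a \<Rightarrow> 'a) \<Rightarrow> 'a \<Rightarrow> 'a" where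
  "quasi_zero add neg b = add b (neg b)"

definition is_T_triple ::
  "('a \<Rightarrow> 'a \<Rightarrow> 'a) \<Rightarrow> 'a \<Rightarrow> 'a set \<Rightarrow> ('a \<Rightarrow> 'a) \<Rightarrow> ('a \<Rightarrow> 'a \<Rightarrow> 'a) \<Rightarrow> bool" where
  "is_T_triple add z T neg act \<longleftrightarrow>
     \<comment> \<open>commutative monoid\<close>
     (\<forall>x y w. add (add x y) w = add x (add y w)) \<and>
     (\<forall>x y. add x y = add y x) \<and>
     (\<forall>x. add z x = x) \<and>
     z \<notin> T \<and>
     \<comment> \<open>negation map\<close>
     (\<forall>x y. neg (add x y) = add (neg x) (neg y)) \<and>
     (\<forall>x. neg (neg x) = x) \<and>
     neg z = z \<and>
     neg ` T \<subseteq> T \<and>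
     \<comment> \<open>action of T on A\<close>
     (\<forall>a\<in>T. \<forall>x y. act a (add x y) = add (act a x) (act a y)) \<and>
     (\<forall>a\<in>T. act a z = z) \<and>
     (\<forall>a\<in>T. \<forall>x. neg (act a x) = act (neg a) x \<and> act (neg a) x = act a (neg x)) \<and>
     \<comment> \<open>T disjoint from quasi-zeros\<close>
     (\<forall>x. quasi_zero add neg x \<notin> T) \<and>
     \<comment> \<open>every element is a finite sum of elements of T\<close>
     (\<forall>x. x \<in> tsums add z T)"

definition meta_tangible ::
  "('a \<Rightarrow> 'a \<Rightarrow> 'a) \<Rightarrow> 'a \<Rightarrow> 'a set \<Rightarrow> ('a \<Rightarrow> 'a) \<Rightarrow> ('a \<Rightarrow> 'a \<Rightarrow> 'a) \<Rightarrow> bool" where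
  "meta_tangible add z T neg act \<longleftrightarrow> is_T_triple add z T neg act \<and>
     (\<forall>a\<in>T. \<forall>b\<in>T. b \<noteq> neg a \<longrightarrow> add a b \<in> T)"

end

theory Submission
  imports Defs
begin

text \<open>If \<open>a + b \<noteq> a\<close> and \<open>b \<noteq> (-)a\<close>, meta-tangibility puts \<open>c = a + b\<close> and then
\<open>d = (-)a + c = a\<^sup>\<circ> + b\<close> in \<open>\<T>\<close>. Were \<open>d \<noteq> b\<close>, also \<open>d (-) b\<close> would be tangible;
but \<open>d (-) b = c\<^sup>\<circ>\<close>, and quasi-zeros are never tangible. Hence \<open>a\<^sup>\<circ> + b = b\<close>.\<close>

context
  fixes add :: "'a \<Rightarrow> 'a \<Rightarrow> 'a" and z :: 'a and T :: "'a set"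
    and neg :: "'a \<Rightarrow> 'a" and act :: "'a \<Rightarrow> 'a \<Rightarrow> 'a"
  assumes meta_tangible: "meta_tangible add z T neg act"
begin

lemma is_T_triple: "is_T_triple add z T neg act"
  using meta_tangible unfolding meta_tangible_def by simp

lemma add_assoc: "add (add x y) w = add x (add y w)"
  using is_T_triple unfolding is_T_triple_def by (elim conjE) (simp add: image_subset_iff)

lemma add_commute: "add x y = add y x"
  using is_T_triple unfolding is_T_triple_def by (elim conjE) (simp add: image_subset_iff)

lemma neg_add: "neg (add x y) = add (neg x) (neg y)"
  using is_T_triple unfolding is_T_triple_def by (elim conjE) (simp add: image_subset_iff)

lemma neg_neg: "neg (neg x) = x"
  using is_T_triple unfolding is_T_triple_def by (elim conjE) (simp add: image_subset_iff)

lemma neg_tangible: "x \<in> T \<Longrightarrow> neg x \<in> T"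
  using is_T_triple unfolding is_T_triple_def by (elim conjE) (simp add: image_subset_iff)

lemma quasi_zero_not_tangible: "quasi_zero add neg x \<notin> T"
  using is_T_triple unfolding is_T_triple_def by (elim conjE) (simp add: image_subset_iff)

lemma add_tangible: "x \<in> T \<Longrightarrow> y \<in> T \<Longrightarrow> y \<noteq> neg x \<Longrightarrow> add x y \<in> T"
  using meta_tangible unfolding meta_tangible_def by simp

lemma add_left_commute: "add x (add y w) = add y (add x w)"
  by (metis add_assoc add_commute)

lemmas add_ac = add_assoc add_commute add_left_commute

lemma quasi_zero_add_absorb:
  assumes "add a b = a"
  shows "add (quasi_zero add neg a) b = quasi_zero add neg a"
proof -
  have "add (quasi_zero add neg a) b = add (add a b) (neg a)"
    unfolding quasi_zero_def by (simp add: add_ac)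
  with assms show ?thesis
    unfolding quasi_zero_def by simp
qed

lemma quasi_zero_add_tangible:
  assumes a: "a \<in> T" and b: "b \<in> T" and "a \<noteq> neg b" and "add a b \<noteq> a"
  shows "add (quasi_zero add neg a) b = b"
proof (rule ccontr)
  define c where "c = add a b"
  define d where "d = add (neg a) c"
  have c_tangible: "c \<in> T"
    unfolding c_def using add_tangible[OF a b] \<open>a \<noteq> neg b\<close> neg_neg by metis
  have d_tangible: "d \<in> T"
    unfolding d_def using add_tangible[OF neg_tangible[OF a] c_tangible] \<open>add a b \<noteq> a\<close>
    by (auto simp: c_def neg_neg)
  have d_eq: "d = add (quasi_zero add neg a) b"
    unfolding d_def c_def quasi_zero_def by (simp add: add_ac)
  assume "add (quasi_zero add neg a) b \<noteq> b"
  then have "neg b \<noteq> neg d"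
    using d_eq neg_neg by metis
  then have "add d (neg b) \<in> T"
    using add_tangible[OF d_tangible neg_tangible[OF b]] by simp
  moreover have "add d (neg b) = quasi_zero add neg c"
    unfolding d_def c_def quasi_zero_def neg_add by (simp add: add_ac)
  ultimately show False
    using quasi_zero_not_tangible by simp
qed

end

theorem lemma7p5:
  fixes add :: "'a \<Rightarrow> 'a \<Rightarrow> 'a" and z :: 'a and T :: "'a set"
    and neg :: "'a \<Rightarrow> 'a" and act :: "'a \<Rightarrow> 'a \<Rightarrow> 'a" and a b :: 'a
  assumes "meta_tangible add z T neg act"
    and "a \<in> T" and "b \<in> T"
  shows "a = neg b
      \<or> (add a b = a \<and> add (quasi_zero add neg a) b = quasi_zero add neg a)
      \<or> add (quasi_zero add neg a) b = b"
  using quasi_zero_add_absorb[OF assms(1)] quasi_zero_add_tangible[OF assms]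
  by blast

end
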